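(* Let $\mathcal G$ be a shortest-path game in which $\mathrm{Val}^{\mathrm d}(v)\neq+\infty$ and $\overline{\mathrm{Val}}^{\mathrm m}(v)\neq+\infty$ for all vertices $v$. Let $\sigma_1$ be a fake-optimal NC-strategy of Min, $\sigma_2$ an attractor strategy of Min, $p\in(0,1)$, $\rho_p$ the memoryless strategy defined below, and $v_0\in V$. Then for every memoryless strategy $\tau$ of Max, $\mathbb P^{\rho_p,\tau}_{v_0}(\Diamond T)=1$, i.e. the target set is reached with probability 1.
   Context: A shortest-path game is $\mathcal G=(V_{\mathrm{Max}},V_{\mathrm{Min}},T,E,w)$ with finite $V=V_{\mathrm{Max}}\uplus V_{\mathrm{Min}}\uplus T$, edges $E\subseteq (V\setminus T)\times V$ with every non-target vertex having a successor, and integer weights $w\colon E\to\mathbb Z$. Plays from $v$ are finite paths ending at their first visit to $T$ (total payoff $\mathrm{TP}$ = sum of weights) or infinite paths avoiding $T$ ($\mathrm{TP}=+\infty$). Strategies of Min (resp. Max) map finite paths ending in $V_{\mathrm{Min}}$ (resp. $V_{\mathrm{Max}}$) to distributions on successors of the last vertex; deterministic = always Dirac, memoryless = depends only on the last vertex. For deterministic $\sigma,\tau$, $\mathrm{Val}^\sigma(v)=\sup_\tau \mathrm{TP}$ of the unique conforming play, and $\mathrm{Val}^{\mathrm d}(v)=\inf_\sigma\mathrm{Val}^\sigma(v)$. For memoryless $\rho$ (Min) and $\tau$ (Max), $\mathbb P^{\rho,\tau}_v$ and $\mathbb E^{\rho,\tau}_v$ refer to the induced Markov chain from $v$; $\overline{\mathrm{Val}}^{\mathrm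 m}(v)=\inf_\rho\sup_\tau\mathbb E^{\rho,\tau}_v(\mathrm{TP})$ over memoryless strategies. A path conforms to a memoryless deterministic Min strategy $\sigma_1$ if each Min vertex $u$ on it (except possibly the last) is followed by $\sigma_1(u)$. An NC-strategy is a memoryless deterministic Min strategy all of whose conforming cycles have negative total weight; it is fake-optimal if for all $v$, every finite play from $v$ ending in $T$ conforming to it has total payoff at most $\mathrm{Val}^{\mathrm d}(v)$. An attractor strategy is a memoryless deterministic Min strategy guaranteeing that every conforming play reaches $T$. The strategy $\rho_p$: for $v\in V_{\mathrm{Min}}$, if the strongly connected component of $v$ in $(V,E)$ contains no negative-weight cycle, $\rho_p(v)$ is the Dirac distribution on $\sigma_1(v)$; otherwise, if $\sigma_1(v)\ne\sigma_2(v)$, $\rho_p(v)$ chooses $\sigma_1(v)$ with probability $p$ and $\sigma_2(v)$ with probability $1-p$, and if $\sigma_1(v)=\sigma_2(v)$ it chooses it with probability 1. *)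

theory Defs
  imports "HOL-Probability.Probability"
begin

text \<open>Vertices form a finite type 'v; V = UNIV is partitioned into VMax, VMin, T.
  Weights are given by w :: 'v => 'v => int (only relevant on edges).\<close>

definition spg :: "'v::finite set \<Rightarrow> 'v set \<Rightarrow> 'v set \<Rightarrow> ('v \<times> 'v) set \<Rightarrow> bool" where
  "spg VMax VMin T E \<longleftrightarrow>
     VMax \<inter> VMin = {} \<and> VMax \<inter> T = {} \<and> VMin \<inter> T = {} \<and> VMax \<union> VMin \<union> T = UNIV \<and>
     E \<subseteq> (- T) \<times> UNIV \<and> (\<forall>v. v \<notin> T \<longrightarrow> (\<exists>u. (v, u) \<in> E))"

definition is_path :: "('v \<times> 'v) set \<Rightarrow> 'v list \<Rightarrow> bool" where
  "is_path E xs \<longleftrightarrow> xs \<noteq> [] \<and> (\<forall>i < length xs - 1. (xs ! i, xs ! Suc i) \<in> E)"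

definition path_weight :: "('v \<Rightarrow> 'v \<Rightarrow> int) \<Rightarrow> 'v list \<Rightarrow> int" where
  "path_weight w xs = (\<Sum>i < length xs - 1. w (xs ! i) (xs ! Suc i))"

definition is_cycle :: "('v \<times> 'v) set \<Rightarrow> 'v list \<Rightarrow> bool" where
  "is_cycle E xs \<longleftrightarrow> is_path E xs \<and> length xs \<ge> 2 \<and> hd xs = last xs"

definition conforms :: "'v set \<Rightarrow> ('v \<Rightarrow> 'v) \<Rightarrow> 'v list \<Rightarrow> bool" where
  "conforms VMin \<sigma> xs \<longleftrightarrow> (\<forall>i < length xs - 1. xs ! i \<in> VMin \<longrightarrow> xs ! Suc i = \<sigma> (xs ! i))"

text \<open>A play is represented by an infinite vertex sequence; once the target is reached, only the
  prefix up to the first visit of T matters.\<close>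
definition TP :: "'v set \<Rightarrow> ('v \<Rightarrow> 'v \<Rightarrow> int) \<Rightarrow> (nat \<Rightarrow> 'v) \<Rightarrow> ereal" where
  "TP T w \<omega> = (if \<exists>n. \<omega> n \<in> T
      then ereal (real_of_int (\<Sum>i < (LEAST n. \<omega> n \<in> T). w (\<omega> i) (\<omega> (Suc i))))
      else \<infinity>)"

definition det_strategy :: "('v \<times> 'v) set \<Rightarrow> 'v set \<Rightarrow> ('v list \<Rightarrow> 'v) \<Rightarrow> bool" where
  "det_strategy E VP \<sigma> \<longleftrightarrow> (\<forall>h. h \<noteq> [] \<and> last h \<in> VP \<longrightarrow> (last h, \<sigma> h) \<in> E)"

primrec history :: "'v set \<Rightarrow> 'v set \<Rightarrow> ('v list \<Rightarrow> 'v) \<Rightarrow> ('v list \<Rightarrow> 'v) \<Rightarrow> 'v \<Rightarrow> nat \<Rightarrow> 'v list" where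
  "history VMin T \<sigma> \<tau> v 0 = [v]"
| "history VMin T \<sigma> \<tau> v (Suc n) =
     (let h = history VMin T \<sigma> \<tau> v n; u = last h
      in h @ [if u \<in> T then u else if u \<in> VMin then \<sigma> h else \<tau> h])"

definition det_play :: "'v set \<Rightarrow> 'v set \<Rightarrow> ('v list \<Rightarrow> 'v) \<Rightarrow> ('v list \<Rightarrow> 'v) \<Rightarrow> 'v \<Rightarrow> nat \<Rightarrow> 'v" where
  "det_play VMin T \<sigma> \<tau> v n = history VMin T \<sigma> \<tau> v n ! n"

definition Val_sigma :: "'v set \<Rightarrow> 'v set \<Rightarrow> 'v set \<Rightarrow> ('v \<times> 'v) set \<Rightarrow> ('v \<Rightarrow> 'v \<Rightarrow> int)
    \<Rightarrow> ('v list \<Rightarrow> 'v) \<Rightarrow> 'v \<Rightarrow> ereal" where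
  "Val_sigma VMax VMin T E w \<sigma> v =
     (SUP \<tau> \<in> {\<tau>. det_strategy E VMax \<tau>}. TP T w (det_play VMin T \<sigma> \<tau> v))"

definition Val_d :: "'v set \<Rightarrow> 'v set \<Rightarrow> 'v set \<Rightarrow> ('v \<times> 'v) set \<Rightarrow> ('v \<Rightarrow> 'v \<Rightarrow> int) \<Rightarrow> 'v \<Rightarrow> ereal" where
  "Val_d VMax VMin T E w v =
     (INF \<sigma> \<in> {\<sigma>. det_strategy E VMin \<sigma>}. Val_sigma VMax VMin T E w \<sigma> v)"

definition memoryless_strategy :: "('v \<times> 'v) set \<Rightarrow> 'v set \<Rightarrow> ('v \<Rightarrow> 'v pmf) \<Rightarrow> bool" where
  "memoryless_strategy E VP \<rho> \<longleftrightarrow> (\<forall>u \<in> VP. \<forall>x \<in> set_pmf (\<rho> u). (u, x) \<in> E)"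

text \<open>Transition kernel of the Markov chain induced by memoryless rho (Min) and tau (Max);
  target vertices are made absorbing (plays end there).\<close>
definition mc_kernel :: "'v set \<Rightarrow> 'v set \<Rightarrow> ('v \<Rightarrow> 'v pmf) \<Rightarrow> ('v \<Rightarrow> 'v pmf) \<Rightarrow> 'v \<Rightarrow> 'v pmf" where
  "mc_kernel VMax VMin \<rho> \<tau> u =
     (if u \<in> VMin then \<rho> u else if u \<in> VMax then \<tau> u else return_pmf u)"

definition mc_step :: "('v \<Rightarrow> 'v pmf) \<Rightarrow> 'v \<Rightarrow> nat \<Rightarrow> (nat \<Rightarrow> 'v) \<Rightarrow> 'v measure" where
  "mc_step K v i \<omega> = (if i = 0 then return (count_space UNIV) v else measure_pmf (K (\<omega> (i - 1))))"

definition mc_paths :: "('v \<Rightarrow> 'v pmf) \<Rightarrow> 'v \<Rightarrow> (nat \<Rightarrow> 'v) measure" where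
  "mc_paths K v = projective_family.lim UNIV
      (Ionescu_Tulcea.CI (mc_step K v) (\<lambda>_. count_space UNIV)) (\<lambda>_. count_space UNIV)"

definition ereal_expectation :: "'a measure \<Rightarrow> ('a \<Rightarrow> ereal) \<Rightarrow> ereal" where
  "ereal_expectation M X =
     enn2ereal (\<integral>\<^sup>+ x. e2ennreal (max 0 (X x)) \<partial>M) - enn2ereal (\<integral>\<^sup>+ x. e2ennreal (max 0 (- X x)) \<partial>M)"

definition Val_m_bar :: "'v set \<Rightarrow> 'v set \<Rightarrow> 'v set \<Rightarrow> ('v \<times> 'v) set \<Rightarrow> ('v \<Rightarrow> 'v \<Rightarrow> int) \<Rightarrow> 'v \<Rightarrow> ereal" where
  "Val_m_bar VMax VMin T E w v =
     (INF \<rho> \<in> {\<rho>. memoryless_strategy E VMin \<rho>}. SUP \<tau> \<in> {\<tau>. memoryless_strategy E VMax \<tau>}.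
        ereal_expectation (mc_paths (mc_kernel VMax VMin \<rho> \<tau>) v) (TP T w))"

definition md_strategy :: "('v \<times> 'v) set \<Rightarrow> 'v set \<Rightarrow> ('v \<Rightarrow> 'v) \<Rightarrow> bool" where
  "md_strategy E VMin \<sigma> \<longleftrightarrow> (\<forall>u \<in> VMin. (u, \<sigma> u) \<in> E)"

definition NC_strategy :: "'v set \<Rightarrow> ('v \<times> 'v) set \<Rightarrow> ('v \<Rightarrow> 'v \<Rightarrow> int) \<Rightarrow> ('v \<Rightarrow> 'v) \<Rightarrow> bool" where
  "NC_strategy VMin E w \<sigma> \<longleftrightarrow> md_strategy E VMin \<sigma> \<and>
     (\<forall>xs. is_cycle E xs \<and> conforms VMin \<sigma> xs \<longrightarrow> path_weight w xs < 0)"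

definition fake_optimal :: "'v set \<Rightarrow> 'v set \<Rightarrow> 'v set \<Rightarrow> ('v \<times> 'v) set \<Rightarrow> ('v \<Rightarrow> 'v \<Rightarrow> int)
    \<Rightarrow> ('v \<Rightarrow> 'v) \<Rightarrow> bool" where
  "fake_optimal VMax VMin T E w \<sigma> \<longleftrightarrow>
     (\<forall>v xs. is_path E xs \<and> hd xs = v \<and> last xs \<in> T \<and> (\<forall>i < length xs - 1. xs ! i \<notin> T) \<and>
        conforms VMin \<sigma> xs \<longrightarrow> ereal (real_of_int (path_weight w xs)) \<le> Val_d VMax VMin T E w v)"

text \<open>Every play conforming to sigma reaches T: there is no infinite path (which necessarily
  avoids T, as T has no outgoing edges) conforming to sigma.\<close>
definition attractor_strategy :: "'v set \<Rightarrow> 'v set \<Rightarrow> ('v \<times> 'v) set \<Rightarrow> ('v \<Rightarrow> 'v) \<Rightarrow> bool" where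
  "attractor_strategy VMin T E \<sigma> \<longleftrightarrow> md_strategy E VMin \<sigma> \<and>
     \<not> (\<exists>\<omega>. \<forall>n. \<omega> n \<notin> T \<and> (\<omega> n, \<omega> (Suc n)) \<in> E \<and> (\<omega> n \<in> VMin \<longrightarrow> \<omega> (Suc n) = \<sigma> (\<omega> n)))"

definition scc :: "('v \<times> 'v) set \<Rightarrow> 'v \<Rightarrow> 'v set" where
  "scc E v = {u. (v, u) \<in> E\<^sup>* \<and> (u, v) \<in> E\<^sup>*}"

definition scc_has_neg_cycle :: "('v \<times> 'v) set \<Rightarrow> ('v \<Rightarrow> 'v \<Rightarrow> int) \<Rightarrow> 'v \<Rightarrow> bool" where
  "scc_has_neg_cycle E w v \<longleftrightarrow> (\<exists>xs. is_cycle E xs \<and> set xs \<subseteq> scc E v \<and> path_weight w xs < 0)"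

definition rho_p :: "('v \<times> 'v) set \<Rightarrow> ('v \<Rightarrow> 'v \<Rightarrow> int) \<Rightarrow> ('v \<Rightarrow> 'v) \<Rightarrow> ('v \<Rightarrow> 'v) \<Rightarrow> real \<Rightarrow> 'v \<Rightarrow> 'v pmf" where
  "rho_p E w \<sigma>1 \<sigma>2 p v =
     (if \<not> scc_has_neg_cycle E w v then return_pmf (\<sigma>1 v)
      else if \<sigma>1 v \<noteq> \<sigma>2 v then map_pmf (\<lambda>b. if b then \<sigma>1 v else \<sigma>2 v) (bernoulli_pmf p)
      else return_pmf (\<sigma>1 v))"

end

theory Submission
  imports Defs
begin

text \<open>Let \<open>s\<close> follow \<open>\<sigma>\<^sub>2\<close> in strongly connected components containing a negative cycle,
  \<open>\<sigma>\<^sub>1\<close> in the other components, and some move in the support of \<open>\<tau>\<close> at Max vertices,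
  so that every step of \<open>s\<close> has positive probability under \<open>\<rho>\<^sub>p\<close> and \<open>\<tau>\<close>. Every
  \<open>s\<close>-orbit reaches \<open>T\<close>: otherwise it ends in a cycle inside a single component; if that
  component has a negative cycle, the cycle conforms to the attractor strategy \<open>\<sigma>\<^sub>2\<close>, which
  is impossible, and otherwise it conforms to the NC-strategy \<open>\<sigma>\<^sub>1\<close>, so it is itself a
  negative cycle of that component. Hence from every vertex \<open>T\<close> is reached with positive
  probability, uniformly within \<open>N\<close> steps since there are finitely many vertices, and the
  probability of avoiding \<open>T\<close> for \<open>kN\<close> steps is at most \<open>c\<^sup>k\<close> for some \<open>c < 1\<close>.\<close>

section \<open>Path measure of the induced Markov chain\<close>

lemma sets_PiM_countable_finite:
  fixes I :: "'i set"
  assumes "finite I" and "A \<subseteq> space (PiM I (\<lambda>_. count_space (UNIV::'a::countable set)))"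
  shows "A \<in> sets (PiM I (\<lambda>_. count_space (UNIV::'a set)))"
proof (rule sets.countable)
  fix a assume "a \<in> A"
  then have "a \<in> PiE I (\<lambda>_. UNIV)"
    using assms(2) by (auto simp: space_PiM)
  then have "{a} = PiE I (\<lambda>i. {a i})"
    by (auto simp: PiE_iff extensional_def fun_eq_iff) metis
  then show "{a} \<in> sets (PiM I (\<lambda>_. count_space (UNIV::'a set)))"
    using assms(1) by (auto intro!: sets_PiM_I_finite)
next
  have "countable (PiE I (\<lambda>_. (UNIV::'a set)))"
    using assms(1) by (intro countable_PiE) auto
  then show "countable A"
    using assms(2) by (auto simp: space_PiM intro: countable_subset)
qed

lemma measurable_PiM_countable_finite:
  fixes I :: "'i set"
  assumes "finite I"
    and "\<And>x. x \<in> space (PiM I (\<lambda>_. count_space (UNIV::'a::countable set))) \<Longrightarrow> f x \<in> space N"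
  shows "f \<in> measurable (PiM I (\<lambda>_. count_space (UNIV::'a set))) N"
  unfolding measurable_def using assms by (auto intro!: sets_PiM_countable_finite)

lemma Ionescu_Tulcea_mc_step:
  fixes K :: "'v::countable \<Rightarrow> 'v pmf"
  shows "Ionescu_Tulcea (mc_step K v) (\<lambda>_. count_space UNIV)"
proof -
  have "prob_space (mc_step K v i x)" for i x
    by (simp add: mc_step_def prob_space_return measure_pmf.prob_space_axioms)
  then show ?thesis
    by (intro Ionescu_Tulcea.intro measurable_PiM_countable_finite)
      (auto simp: space_subprob_algebra prob_space_imp_subprob_space mc_step_def)
qed

lemma prob_space_mc_paths:
  fixes K :: "'v::countable \<Rightarrow> 'v pmf"
  shows "prob_space (mc_paths K v)"
proof -
  interpret IT: Ionescu_Tulcea "mc_step K v" "\<lambda>_. count_space UNIV"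
    by (rule Ionescu_Tulcea_mc_step)
  have "(\<lambda>x. restrict x {}) \<in> measurable IT.PF.lim (PiM {} (\<lambda>_. count_space (UNIV::'v set)))"
    by (simp add: measurable_cong_sets[OF IT.PF.sets_lim refl] measurable_restrict)
  moreover have "distr IT.PF.lim (PiM {} (\<lambda>_. count_space UNIV)) (\<lambda>x. restrict x {}) = IT.CI {}"
    by (rule IT.distr_lim) (rule finite.emptyI)
  moreover have "prob_space (IT.CI {})"
    by (rule IT.PF.prob_space_P) (rule finite.emptyI, rule empty_subsetI)
  ultimately show ?thesis
    unfolding mc_paths_def by (metis prob_space_distrD)
qed

lemma sets_mc_paths: "sets (mc_paths K v) = sets (PiM UNIV (\<lambda>_. count_space (UNIV::'v::countable set)))"
proof -
  interpret IT: Ionescu_Tulcea "mc_step K v" "\<lambda>_. count_space UNIV"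
    by (rule Ionescu_Tulcea_mc_step)
  show ?thesis
    by (simp add: mc_paths_def)
qed

lemma space_mc_paths: "space (mc_paths K (v::'v::countable)) = UNIV"
  using sets_eq_imp_space_eq[OF sets_mc_paths] by (simp add: space_PiM)

lemma pred_component_mem[measurable]:
  "Measurable.pred (PiM UNIV (\<lambda>_. count_space (UNIV::'v set))) (\<lambda>\<omega>. \<omega> (n::nat) \<in> T)"
  by (intro measurable_compose[OF measurable_component_singleton]) auto

lemma avoiding_in_sets_mc_paths:
  "{\<omega>. \<forall>i\<in>I. \<omega> i \<notin> T} \<in> sets (mc_paths K (v::'v::countable))"
proof -
  have "{\<omega>. \<forall>i\<in>I. \<omega> i \<notin> T} =
      {\<omega> \<in> space (PiM UNIV (\<lambda>_. count_space (UNIV::'v set))). \<forall>i\<in>I. \<omega> i \<notin> T}"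
    by (simp add: space_PiM)
  also have "\<dots> \<in> sets (mc_paths K v)"
    unfolding sets_mc_paths by measurable
  finally show ?thesis .
qed

section \<open>The chain killed on entering the target\<close>

definition killed_pmf :: "('v \<Rightarrow> 'v pmf) \<Rightarrow> 'v set \<Rightarrow> 'v \<Rightarrow> 'v \<Rightarrow> real" where
  "killed_pmf K T x y = (if y \<in> T then 0 else pmf (K x) y)"

definition killed_step :: "('v::finite \<Rightarrow> 'v pmf) \<Rightarrow> 'v set \<Rightarrow> ('v \<Rightarrow> real) \<Rightarrow> 'v \<Rightarrow> real" where
  "killed_step K T a y = (\<Sum>x\<in>UNIV. a x * killed_pmf K T x y)"

text \<open>\<open>killed_distr K T v m y\<close> is the probability that the chain started in \<open>v\<close> avoids
  \<open>T\<close> at times \<open>0, \<dots>, m\<close> and is in \<open>y\<close> at time \<open>m\<close>; \<open>survival K T n x\<close> is the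
  probability that the chain started in \<open>x\<close> avoids \<open>T\<close> at times \<open>1, \<dots>, n\<close>.\<close>

definition killed_distr :: "('v::finite \<Rightarrow> 'v pmf) \<Rightarrow> 'v set \<Rightarrow> 'v \<Rightarrow> nat \<Rightarrow> 'v \<Rightarrow> real" where
  "killed_distr K T v m = (killed_step K T ^^ m) (indicator ({v} - T))"

primrec survival :: "('v::finite \<Rightarrow> 'v pmf) \<Rightarrow> 'v set \<Rightarrow> nat \<Rightarrow> 'v \<Rightarrow> real" where
  "survival K T 0 x = 1"
| "survival K T (Suc n) x = (\<Sum>y\<in>UNIV. killed_pmf K T x y * survival K T n y)"

lemma killed_pmf_nonneg: "0 \<le> killed_pmf K T x y"
  by (simp add: killed_pmf_def)

lemma killed_pmf_le_pmf: "killed_pmf K T x y \<le> pmf (K x) y"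
  by (simp add: killed_pmf_def)

lemma sum_killed_pmf_le_1:
  fixes K :: "'v::finite \<Rightarrow> 'v pmf"
  shows "(\<Sum>y\<in>UNIV. killed_pmf K T x y) \<le> 1"
proof -
  have "(\<Sum>y\<in>UNIV. killed_pmf K T x y) \<le> (\<Sum>y\<in>UNIV. pmf (K x) y)"
    by (intro sum_mono killed_pmf_le_pmf)
  also have "\<dots> = 1"
    by (rule sum_pmf_eq_1) auto
  finally show ?thesis .
qed

lemma killed_distr_0: "killed_distr K T v 0 = indicator ({v} - T)"
  by (simp add: killed_distr_def)

lemma killed_distr_Suc: "killed_distr K T v (Suc m) = killed_step K T (killed_distr K T v m)"
  by (simp add: killed_distr_def)

lemma killed_distr_nonneg: "0 \<le> killed_distr K T v m y"
  by (induction m arbitrary: y)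
    (auto simp: killed_distr_0 killed_distr_Suc killed_step_def killed_pmf_nonneg intro: sum_nonneg)

lemma killed_distr_target: "y \<in> T \<Longrightarrow> killed_distr K T v m y = 0"
  by (cases m) (auto simp: killed_distr_0 killed_distr_Suc killed_step_def killed_pmf_def)

lemma survival_le_1: "survival K T n x \<le> 1"
proof (induction n arbitrary: x)
  case (Suc n)
  have "survival K T (Suc n) x \<le> (\<Sum>y\<in>UNIV. killed_pmf K T x y)"
    using Suc.IH by (auto intro!: sum_mono mult_left_le killed_pmf_nonneg)
  also have "\<dots> \<le> 1"
    by (rule sum_killed_pmf_le_1)
  finally show ?case .
qed simp

lemma survival_Suc_le: "survival K T (Suc n) x \<le> survival K T n x"
proof (induction n arbitrary: x)
  case 0
  then show ?case
    using sum_killed_pmf_le_1[of K T x] by simp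
next
  case (Suc n)
  then show ?case
    by (auto intro!: sum_mono mult_left_mono killed_pmf_nonneg)
qed

lemma survival_antimono: "m \<le> n \<Longrightarrow> survival K T n x \<le> survival K T m x"
proof (induction n rule: dec_induct)
  case (step n)
  then show ?case
    using survival_Suc_le[of K T n x] by linarith
qed simp

lemma sum_killed_step_funpow:
  "(\<Sum>y\<in>UNIV. (killed_step K T ^^ n) a y) = (\<Sum>x\<in>UNIV. a x * survival K T n x)"
proof (induction n arbitrary: a)
  case (Suc n)
  have "(\<Sum>y\<in>UNIV. (killed_step K T ^^ Suc n) a y)
      = (\<Sum>y\<in>UNIV. (killed_step K T ^^ n) (killed_step K T a) y)"
    by (simp only: funpow_Suc_right o_apply)
  also have "\<dots> = (\<Sum>y\<in>UNIV. \<Sum>x\<in>UNIV. a x * (killed_pmf K T x y * survival K T n y))"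
    by (simp add: Suc.IH killed_step_def sum_distrib_right mult.assoc)
  also have "\<dots> = (\<Sum>x\<in>UNIV. a x * survival K T (Suc n) x)"
    by (subst sum.swap) (simp add: sum_distrib_left)
  finally show ?case .
qed simp

lemma survival_Suc_less_1:
  fixes K :: "'v::finite \<Rightarrow> 'v pmf"
  assumes "y \<in> set_pmf (K x)" and "y \<in> T \<or> survival K T n y < 1"
  shows "survival K T (Suc n) x < 1"
proof -
  have "survival K T (Suc n) x < (\<Sum>z\<in>UNIV. pmf (K x) z)"
    unfolding survival.simps
  proof (rule sum_strict_mono_ex1)
    show "\<forall>z\<in>UNIV. killed_pmf K T x z * survival K T n z \<le> pmf (K x) z"
      using survival_le_1 killed_pmf_le_pmf
      by (metis mult_left_le killed_pmf_nonneg order_trans)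
    show "\<exists>z\<in>UNIV. killed_pmf K T x z * survival K T n z < pmf (K x) z"
      using assms pmf_positive[OF assms(1)] by (auto simp: killed_pmf_def)
  qed simp
  also have "\<dots> = 1"
    by (rule sum_pmf_eq_1) auto
  finally show ?thesis .
qed

lemma survival_less_1_if_reaches:
  fixes K :: "'v::finite \<Rightarrow> 'v pmf"
  assumes "(x, y) \<in> {(a, b). b \<in> set_pmf (K a)}\<^sup>*" and "y \<in> T"
  shows "x \<in> T \<or> (\<exists>n. survival K T n x < 1)"
  using assms(1)
proof (induction rule: converse_rtrancl_induct)
  case (step x z)
  then show ?case
    using survival_Suc_less_1[of z K x T] assms(2) by blast
qed (use assms(2) in blast)

lemma survival_uniform_bound:
  fixes K :: "'v::finite \<Rightarrow> 'v pmf"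
  assumes "\<And>x. x \<notin> T \<Longrightarrow> \<exists>n. survival K T n x < 1"
  obtains c N where "0 \<le> c" "c < 1" "\<And>x. x \<notin> T \<Longrightarrow> survival K T N x \<le> c"
proof -
  obtain n where n: "\<And>x. x \<notin> T \<Longrightarrow> survival K T (n x) x < 1"
    using assms by metis
  define N where "N = Max (range n)"
  define c where "c = Max (insert 0 (survival K T N ` (- T)))"
  have "survival K T N x < 1" if "x \<notin> T" for x
    using survival_antimono[of "n x" N K T x] n[OF that] by (simp add: N_def)
  then have "c < 1"
    by (auto simp: c_def)
  moreover have "0 \<le> c" "\<And>x. x \<notin> T \<Longrightarrow> survival K T N x \<le> c"
    by (auto simp: c_def)
  ultimately show ?thesis
    using that by blast
qed

lemma sum_killed_distr_geometric:
  fixes K :: "'v::finite \<Rightarrow> 'v pmf"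
  assumes "0 \<le> c" and "\<And>x. x \<notin> T \<Longrightarrow> survival K T N x \<le> c"
  shows "(\<Sum>y\<in>UNIV. killed_distr K T v (k * N) y) \<le> c ^ k"
proof (induction k)
  case 0
  then show ?case
    by (cases "v \<in> T") (simp_all add: killed_distr_0 insert_Diff_if indicator_def)
next
  case (Suc k)
  have "(\<Sum>y\<in>UNIV. killed_distr K T v (Suc k * N) y)
      = (\<Sum>x\<in>UNIV. killed_distr K T v (k * N) x * survival K T N x)"
    by (simp add: killed_distr_def funpow_add sum_killed_step_funpow)
  also have "\<dots> \<le> (\<Sum>x\<in>UNIV. killed_distr K T v (k * N) x * c)"
  proof (rule sum_mono)
    show "killed_distr K T v (k * N) x * survival K T N x \<le> killed_distr K T v (k * N) x * c" for x
      using assms(2)[of x]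
      by (cases "x \<in> T") (simp_all add: killed_distr_target killed_distr_nonneg mult_left_mono)
  qed
  also have "\<dots> \<le> c ^ Suc k"
    using mult_left_mono[OF Suc.IH assms(1)] by (simp add: sum_distrib_left[symmetric] mult.commute)
  finally show ?case .
qed

definition avoiding_cylinder :: "'v set \<Rightarrow> nat \<Rightarrow> 'v \<Rightarrow> (nat \<Rightarrow> 'v) set" where
  "avoiding_cylinder T m y =
     {\<omega> \<in> space (PiM {0..<Suc m} (\<lambda>_. count_space UNIV)). (\<forall>i\<le>m. \<omega> i \<notin> T) \<and> \<omega> m = y}"

lemma sets_avoiding_cylinder:
  "avoiding_cylinder T m y \<in> sets (PiM {0..<Suc m} (\<lambda>_. count_space (UNIV::'v::countable set)))"
  by (rule sets_PiM_countable_finite) (auto simp: avoiding_cylinder_def)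

lemma undefined_in_space_PiM_0: "(\<lambda>_. undefined) \<in> space (PiM {0..<0::nat} M)"
  by (simp add: space_PiM_empty)

context
  fixes K :: "'v::finite \<Rightarrow> 'v pmf" and v :: 'v
begin

interpretation IT: Ionescu_Tulcea "mc_step K v" "\<lambda>_. count_space UNIV"
  by (rule Ionescu_Tulcea_mc_step)

text \<open>\<open>IT.C 0 n (\<lambda>_. undefined)\<close> is the joint law of the states at times \<open>0, \<dots>, n - 1\<close>,
  and \<open>IT.eP n \<omega>\<close> extends the history \<open>\<omega>\<close> of length \<open>n\<close> by one transition.\<close>

lemma sets_C_undefined:
  "sets (IT.C 0 n (\<lambda>_. undefined)) = sets (PiM {0..<n} (\<lambda>_. count_space UNIV))"
  using IT.sets_C[OF undefined_in_space_PiM_0] by simp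

lemma space_C_undefined:
  "space (IT.C 0 n (\<lambda>_. undefined)) = space (PiM {0..<n} (\<lambda>_. count_space UNIV))"
  using IT.space_C[OF undefined_in_space_PiM_0] by simp

lemma emeasure_C_Suc_undefined:
  assumes "A \<in> sets (PiM {0..<Suc n} (\<lambda>_. count_space UNIV))"
  shows "emeasure (IT.C 0 (Suc n) (\<lambda>_. undefined)) A =
    (\<integral>\<^sup>+\<omega>. emeasure (IT.eP n \<omega>) A \<partial>IT.C 0 n (\<lambda>_. undefined))"
proof -
  have "IT.eP n \<in> measurable (IT.C 0 n (\<lambda>_. undefined))
      (subprob_algebra (PiM {0..<Suc n} (\<lambda>_. count_space UNIV)))"
    by (subst measurable_cong_sets[OF sets_C_undefined refl]) (rule IT.measurable_eP)
  moreover have "space (IT.C 0 n (\<lambda>_. undefined)) \<noteq> {}"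
    using IT.prob_space_C[OF undefined_in_space_PiM_0] by (rule prob_space.not_empty)
  ultimately show ?thesis
    using emeasure_bind[OF _ _ assms] by simp
qed

lemma emeasure_eP_avoiding_cylinder:
  assumes \<omega>: "\<omega> \<in> space (PiM {0..<Suc m} (\<lambda>_. count_space UNIV))"
  shows "emeasure (IT.eP (Suc m) \<omega>) (avoiding_cylinder T (Suc m) y) =
    (\<Sum>x\<in>UNIV. ennreal (killed_pmf K T x y) * indicator (avoiding_cylinder T m x) \<omega>)"
proof -
  have "fun_upd \<omega> (Suc m) -` avoiding_cylinder T (Suc m) y =
      (if \<omega> \<in> avoiding_cylinder T m (\<omega> m) \<and> y \<notin> T then {y} else {})"
    using \<omega> by (auto simp: avoiding_cylinder_def space_PiM PiE_def extensional_def le_Suc_eq)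
  moreover have "(\<Sum>x\<in>UNIV. ennreal (killed_pmf K T x y) * indicator (avoiding_cylinder T m x) \<omega>) =
      ennreal (killed_pmf K T (\<omega> m) y) * indicator (avoiding_cylinder T m (\<omega> m)) \<omega>"
    by (rule sum.mono_neutral_cong_right[where S = "{\<omega> m}", simplified])
      (auto simp: avoiding_cylinder_def)
  ultimately show ?thesis
    using \<omega> by (simp add: IT.emeasure_eP sets_avoiding_cylinder mc_step_def killed_pmf_def emeasure_pmf_single)
qed

lemma emeasure_C_avoiding_cylinder:
  "emeasure (IT.C 0 (Suc m) (\<lambda>_. undefined)) (avoiding_cylinder T m y) = ennreal (killed_distr K T v m y)"
proof (induction m arbitrary: y)
  case 0
  have "fun_upd (\<lambda>_. undefined) 0 -` avoiding_cylinder T 0 y \<inter> space (count_space UNIV)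
      = {x. x \<notin> T \<and> x = y}"
    by (auto simp: avoiding_cylinder_def space_PiM PiE_def extensional_def)
  then have "emeasure (IT.eP 0 (\<lambda>_. undefined)) (avoiding_cylinder T 0 y)
      = emeasure (mc_step K v 0 (\<lambda>_. undefined)) {x. x \<notin> T \<and> x = y}"
    using IT.emeasure_eP[OF undefined_in_space_PiM_0 sets_avoiding_cylinder[of T 0 y]] by simp
  also have "\<dots> = ennreal (killed_distr K T v 0 y)"
    by (auto simp: mc_step_def killed_distr_0 indicator_def)
  finally show ?case
    using bind_return[OF IT.measurable_eP undefined_in_space_PiM_0] by simp
next
  case (Suc m)
  let ?C = "IT.C 0 (Suc m) (\<lambda>_. undefined)"
  have "emeasure (IT.C 0 (Suc (Suc m)) (\<lambda>_. undefined)) (avoiding_cylinder T (Suc m) y)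
      = (\<integral>\<^sup>+\<omega>. (\<Sum>x\<in>UNIV. ennreal (killed_pmf K T x y) * indicator (avoiding_cylinder T m x) \<omega>)
          \<partial>?C)"
    unfolding emeasure_C_Suc_undefined[OF sets_avoiding_cylinder]
    by (intro nn_integral_cong emeasure_eP_avoiding_cylinder) (simp only: space_C_undefined)
  also have "\<dots> = (\<Sum>x\<in>UNIV. ennreal (killed_pmf K T x y) * emeasure ?C (avoiding_cylinder T m x))"
  proof (subst nn_integral_sum)
    show "(\<lambda>\<omega>. ennreal (killed_pmf K T x y) * indicator (avoiding_cylinder T m x) \<omega>)
        \<in> borel_measurable ?C" for x
      by (subst measurable_cong_sets[OF sets_C_undefined refl]) (rule measurable_PiM_countable_finite; simp)
    show "(\<Sum>x\<in>UNIV.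
          \<integral>\<^sup>+\<omega>. ennreal (killed_pmf K T x y) * indicator (avoiding_cylinder T m x) \<omega> \<partial>?C)
        = (\<Sum>x\<in>UNIV. ennreal (killed_pmf K T x y) * emeasure ?C (avoiding_cylinder T m x))"
      by (intro sum.cong refl nn_integral_cmult_indicator) (simp only: sets_C_undefined sets_avoiding_cylinder)
  qed
  also have "\<dots> = (\<Sum>x\<in>UNIV. ennreal (killed_distr K T v m x * killed_pmf K T x y))"
    unfolding Suc.IH by (simp add: ennreal_mult killed_distr_nonneg killed_pmf_nonneg mult.commute)
  also have "\<dots> = ennreal (killed_distr K T v (Suc m) y)"
    by (simp add: killed_distr_Suc killed_step_def sum_ennreal killed_distr_nonneg killed_pmf_nonneg)
  finally show ?case .
qed

lemma emeasure_mc_paths_avoiding: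
  "emeasure (mc_paths K v) {\<omega>. \<forall>i\<le>m. \<omega> i \<notin> T} = ennreal (\<Sum>y\<in>UNIV. killed_distr K T v m y)"
proof -
  let ?C = "IT.C 0 (Suc m) (\<lambda>_. undefined)"
  let ?F = "\<Union>y. avoiding_cylinder T m y"
  have F: "?F \<in> sets (PiM {0..<Suc m} (\<lambda>_. count_space UNIV))"
    by (rule sets_PiM_countable_finite) (auto simp: avoiding_cylinder_def)
  have "{\<omega>. \<forall>i\<le>m. \<omega> i \<notin> T} = IT.PF.emb UNIV {0..<Suc m} ?F"
    by (auto simp: prod_emb_def avoiding_cylinder_def space_PiM PiE_def extensional_def)
  then have "emeasure (mc_paths K v) {\<omega>. \<forall>i\<le>m. \<omega> i \<notin> T} = emeasure (IT.CI {0..<Suc m}) ?F"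
    using IT.lim[OF _ F] by (simp add: mc_paths_def)
  also have "\<dots> = emeasure ?C ?F"
  proof -
    have "IT.PF.emb {0..<Suc m} {0..<Suc m} ?F = ?F"
      by (rule prod_emb_id) (auto simp: avoiding_cylinder_def space_PiM)
    then show ?thesis
      using IT.emeasure_CI[OF subset_refl F] by (simp only:)
  qed
  also have "\<dots> = (\<Sum>y\<in>UNIV. emeasure ?C (avoiding_cylinder T m y))"
  proof (rule sum_emeasure[symmetric])
    show "range (avoiding_cylinder T m) \<subseteq> sets ?C"
      using sets_avoiding_cylinder[of T m] by (auto simp only: sets_C_undefined)
    show "disjoint_family_on (avoiding_cylinder T m) UNIV"
      by (auto simp: disjoint_family_on_def avoiding_cylinder_def)
  qed simp
  also have "\<dots> = ennreal (\<Sum>y\<in>UNIV. killed_distr K T v m y)"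
    unfolding emeasure_C_avoiding_cylinder by (simp add: sum_ennreal killed_distr_nonneg)
  finally show ?thesis .
qed

end

section \<open>Reaching the target almost surely\<close>

lemma measure_mc_paths_avoiding_le:
  fixes K :: "'v::finite \<Rightarrow> 'v pmf"
  shows "measure (mc_paths K v) {\<omega>. \<forall>n. \<omega> n \<notin> T} \<le> (\<Sum>y\<in>UNIV. killed_distr K T v m y)"
proof -
  interpret prob_space "mc_paths K v"
    by (rule prob_space_mc_paths)
  have "prob {\<omega>. \<forall>n. \<omega> n \<notin> T} \<le> prob {\<omega>. \<forall>i\<le>m. \<omega> i \<notin> T}"
    using avoiding_in_sets_mc_paths[of "{..m}" T K v]
    by (intro finite_measure_mono) (auto simp: Ball_def)
  also have "\<dots> = (\<Sum>y\<in>UNIV. killed_distr K T v m y)"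
    using emeasure_mc_paths_avoiding[of K v m T]
    by (simp add: emeasure_eq_measure killed_distr_nonneg sum_nonneg)
  finally show ?thesis .
qed

lemma measure_mc_paths_reach:
  fixes K :: "'v::finite \<Rightarrow> 'v pmf"
  assumes "\<And>x. x \<notin> T \<Longrightarrow> \<exists>y\<in>T. (x, y) \<in> {(a, b). b \<in> set_pmf (K a)}\<^sup>*"
  shows "measure (mc_paths K v) {\<omega>. \<exists>n. \<omega> n \<in> T} = 1"
proof -
  interpret prob_space "mc_paths K v"
    by (rule prob_space_mc_paths)
  let ?A = "{\<omega>. \<forall>n. \<omega> n \<notin> T}"
  have "\<exists>n. survival K T n x < 1" if "x \<notin> T" for x
    using assms[OF that] survival_less_1_if_reaches that by metis
  then obtain c N where c: "0 \<le> c" "c < 1" and N: "\<And>x. x \<notin> T \<Longrightarrow> survival K T N x \<le> c"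
    using survival_uniform_bound by blast
  have "prob ?A \<le> 0"
  proof (rule LIMSEQ_le_const)
    show "(\<lambda>k. c ^ k) \<longlonglongrightarrow> 0"
      using c by (intro LIMSEQ_power_zero) simp
    show "\<exists>k0. \<forall>k\<ge>k0. prob ?A \<le> c ^ k"
      using order_trans[OF measure_mc_paths_avoiding_le sum_killed_distr_geometric[OF c(1) N]] by blast
  qed
  then have "prob ?A = 0"
    using measure_nonneg[of "mc_paths K v" ?A] by linarith
  moreover have "{\<omega>. \<exists>n. \<omega> n \<in> T} = space (mc_paths K v) - ?A"
    by (auto simp: space_mc_paths)
  ultimately show ?thesis
    using prob_compl avoiding_in_sets_mc_paths[of UNIV T K v] by simp
qed

section \<open>Orbits of a successor function in the game graph\<close>

lemma scc_eq: "u \<in> scc E v \<Longrightarrow> scc E u = scc E v"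
  unfolding scc_def by (auto intro: rtrancl_trans)

lemma scc_has_neg_cycle_eq: "u \<in> scc E v \<Longrightarrow> scc_has_neg_cycle E w u = scc_has_neg_cycle E w v"
  unfolding scc_has_neg_cycle_def by (simp add: scc_eq)

lemma funpow_periodic_point:
  fixes f :: "'v::finite \<Rightarrow> 'v"
  obtains i d where "0 < d" "(f ^^ d) ((f ^^ i) x) = (f ^^ i) x"
proof -
  have "\<not> inj (\<lambda>n. (f ^^ n) x)"
    using range_inj_infinite finite by blast
  then obtain i j where "i < j" "(f ^^ i) x = (f ^^ j) x"
    unfolding inj_def by (metis linorder_neqE_nat)
  moreover have "(f ^^ (j - i)) ((f ^^ i) x) = (f ^^ (j - i + i)) x"
    by (simp add: funpow_add)
  ultimately have "(f ^^ (j - i)) ((f ^^ i) x) = (f ^^ i) x"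
    by simp
  moreover have "0 < j - i"
    using \<open>i < j\<close> by simp
  ultimately show ?thesis
    using that by blast
qed

lemma funpow_orbit_rtrancl:
  assumes "\<And>k. ((f ^^ k) x, f ((f ^^ k) x)) \<in> E"
  shows "(x, (f ^^ n) x) \<in> E\<^sup>*"
  by (induction n) (use assms in \<open>auto intro: rtrancl_into_rtrancl\<close>)

lemma periodic_orbit_in_scc:
  assumes "0 < d" and "(f ^^ d) y = y" and "\<And>k. ((f ^^ k) y, f ((f ^^ k) y)) \<in> E"
  shows "(f ^^ k) y \<in> scc E y"
proof -
  have "(f ^^ (d * n)) y = y" for n
    by (induction n) (simp_all add: funpow_add assms(2))
  moreover have "(f ^^ (d * k - k)) ((f ^^ k) y) = (f ^^ (d * k - k + k)) y"
    by (simp add: funpow_add)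
  moreover have "d * k - k + k = d * k"
    using assms(1) by simp
  ultimately have "(f ^^ (d * k - k)) ((f ^^ k) y) = y"
    by simp
  moreover have "((f ^^ k) y, (f ^^ n) ((f ^^ k) y)) \<in> E\<^sup>*" for n
  proof (rule funpow_orbit_rtrancl)
    show "((f ^^ j) ((f ^^ k) y), f ((f ^^ j) ((f ^^ k) y))) \<in> E" for j
      using assms(3)[of "j + k"] by (simp add: funpow_add)
  qed
  ultimately have "((f ^^ k) y, y) \<in> E\<^sup>*"
    by metis
  moreover have "(y, (f ^^ k) y) \<in> E\<^sup>*"
    using assms(3) by (rule funpow_orbit_rtrancl)
  ultimately show ?thesis
    by (simp add: scc_def)
qed

lemma is_cycle_periodic_orbit:
  assumes "0 < d" and "(f ^^ d) y = y" and "\<And>k. ((f ^^ k) y, f ((f ^^ k) y)) \<in> E"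
  shows "is_cycle E (map (\<lambda>k. (f ^^ k) y) [0..<Suc d])"
  using assms by (auto simp: is_cycle_def is_path_def hd_map last_map simp del: upt_Suc)

lemma conforms_orbit:
  assumes "\<And>k. (f ^^ k) y \<in> VMin \<Longrightarrow> f ((f ^^ k) y) = \<sigma> ((f ^^ k) y)"
  shows "conforms VMin \<sigma> (map (\<lambda>k. (f ^^ k) y) [0..<n])"
  using assms by (auto simp: conforms_def)

lemma rtrancl_reaches_along_orbit:
  assumes "\<And>u. u \<notin> T \<Longrightarrow> (u, f u) \<in> R" and "\<exists>n. (f ^^ n) x \<in> T"
  shows "\<exists>y\<in>T. (x, y) \<in> R\<^sup>*"
proof -
  obtain n where "(f ^^ n) x \<in> T"
    using assms(2) by blast
  then show ?thesis
  proof (induction n arbitrary: x)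
    case (Suc n)
    show ?case
    proof (cases "x \<in> T")
      case False
      have "(f ^^ n) (f x) \<in> T"
        using Suc.prems by (simp add: funpow_Suc_right del: funpow.simps)
      then obtain y where "y \<in> T" "(f x, y) \<in> R\<^sup>*"
        using Suc.IH by blast
      then show ?thesis
        using assms(1)[OF False] by (meson converse_rtrancl_into_rtrancl)
    qed auto
  qed auto
qed

lemma orbit_reaches_target:
  fixes s :: "'v::finite \<Rightarrow> 'v"
  assumes NC: "NC_strategy VMin E w \<sigma>1" and attr: "attractor_strategy VMin T E \<sigma>2"
    and edge: "\<And>u. u \<notin> T \<Longrightarrow> (u, s u) \<in> E"
    and choice: "\<And>u. u \<in> VMin \<Longrightarrow> s u = (if scc_has_neg_cycle E w u then \<sigma>2 u else \<sigma>1 u)"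
  shows "\<exists>n. (s ^^ n) x \<in> T"
proof (rule ccontr)
  assume no_hit: "\<nexists>n. (s ^^ n) x \<in> T"
  obtain i d where d: "0 < d" "(s ^^ d) ((s ^^ i) x) = (s ^^ i) x"
    by (rule funpow_periodic_point)
  define y where "y = (s ^^ i) x"
  have avoid: "(s ^^ k) y \<notin> T" for k
  proof -
    have "(s ^^ k) y = (s ^^ (k + i)) x"
      by (simp add: y_def funpow_add)
    then show ?thesis
      using no_hit by auto
  qed
  then have orbit_edge: "((s ^^ k) y, s ((s ^^ k) y)) \<in> E" for k
    by (rule edge)
  have orbit_scc: "(s ^^ k) y \<in> scc E y" for k
    using d orbit_edge by (intro periodic_orbit_in_scc) (simp_all add: y_def)
  then have same_neg: "scc_has_neg_cycle E w ((s ^^ k) y) = scc_has_neg_cycle E w y" for k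
    by (rule scc_has_neg_cycle_eq)
  show False
  proof (cases "scc_has_neg_cycle E w y")
    case True
    then have "\<forall>n. (s ^^ n) y \<notin> T \<and> ((s ^^ n) y, (s ^^ Suc n) y) \<in> E \<and>
        ((s ^^ n) y \<in> VMin \<longrightarrow> (s ^^ Suc n) y = \<sigma>2 ((s ^^ n) y))"
      using avoid orbit_edge choice same_neg by simp
    then have "\<exists>\<omega>. \<forall>n. \<omega> n \<notin> T \<and> (\<omega> n, \<omega> (Suc n)) \<in> E \<and>
        (\<omega> n \<in> VMin \<longrightarrow> \<omega> (Suc n) = \<sigma>2 (\<omega> n))"
      by (rule exI[where x = "\<lambda>n. (s ^^ n) y"])
    with attr show False
      unfolding attractor_strategy_def by blast
  next
    case False
    let ?xs = "map (\<lambda>k. (s ^^ k) y) [0..<Suc d]"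
    have cycle: "is_cycle E ?xs"
      using d orbit_edge by (intro is_cycle_periodic_orbit) (simp_all add: y_def)
    moreover have "conforms VMin \<sigma>1 ?xs"
      using choice same_neg False by (intro conforms_orbit) simp
    ultimately have "path_weight w ?xs < 0"
      using NC by (simp add: NC_strategy_def)
    moreover have "set ?xs \<subseteq> scc E y"
      using orbit_scc by auto
    ultimately have "scc_has_neg_cycle E w y"
      using cycle unfolding scc_has_neg_cycle_def by blast
    with False show False
      by simp
  qed
qed

lemma set_pmf_rho_p:
  assumes "0 < p" and "p < 1"
  shows "set_pmf (rho_p E w \<sigma>1 \<sigma>2 p u) =
    (if scc_has_neg_cycle E w u then {\<sigma>1 u, \<sigma>2 u} else {\<sigma>1 u})"
  using assms by (auto simp: rho_p_def)

lemma set_pmf_mc_kernel_rho_p_edge: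
  assumes "spg VMax VMin T E" and "md_strategy E VMin \<sigma>1" and "md_strategy E VMin \<sigma>2"
    and "0 < p" "p < 1" and "memoryless_strategy E VMax \<tau>"
    and "u \<notin> T" and "z \<in> set_pmf (mc_kernel VMax VMin (rho_p E w \<sigma>1 \<sigma>2 p) \<tau> u)"
  shows "(u, z) \<in> E"
  using assms
  by (auto simp: spg_def md_strategy_def memoryless_strategy_def mc_kernel_def set_pmf_rho_p
      split: if_splits)

definition support_successor ::
    "'v set \<Rightarrow> ('v \<times> 'v) set \<Rightarrow> ('v \<Rightarrow> 'v \<Rightarrow> int) \<Rightarrow> ('v \<Rightarrow> 'v) \<Rightarrow> ('v \<Rightarrow> 'v) \<Rightarrow>
      ('v \<Rightarrow> 'v pmf) \<Rightarrow> 'v \<Rightarrow> 'v" where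
  "support_successor VMin E w \<sigma>1 \<sigma>2 \<tau> u =
     (if u \<in> VMin then if scc_has_neg_cycle E w u then \<sigma>2 u else \<sigma>1 u
      else SOME z. z \<in> set_pmf (\<tau> u))"

lemma support_successor_in_set_pmf:
  assumes "spg VMax VMin T E" and "0 < p" "p < 1" and "u \<notin> T"
  shows "support_successor VMin E w \<sigma>1 \<sigma>2 \<tau> u
    \<in> set_pmf (mc_kernel VMax VMin (rho_p E w \<sigma>1 \<sigma>2 p) \<tau> u)"
  using assms
  by (auto simp: spg_def support_successor_def mc_kernel_def set_pmf_rho_p some_in_eq set_pmf_not_empty)

theorem proposition11:
  fixes VMax VMin T :: "'v::finite set" and E :: "('v \<times> 'v) set" and w :: "'v \<Rightarrow> 'v \<Rightarrow> int"
    and \<sigma>1 \<sigma>2 :: "'v \<Rightarrow> 'v" and p :: real and v0 :: 'v and \<tau> :: "'v \<Rightarrow> 'v pmf"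
  assumes game: "spg VMax VMin T E"
    and fin_d: "\<forall>v. Val_d VMax VMin T E w v \<noteq> \<infinity>"
    and fin_m: "\<forall>v. Val_m_bar VMax VMin T E w v \<noteq> \<infinity>"
    and NC: "NC_strategy VMin E w \<sigma>1"
    and fake: "fake_optimal VMax VMin T E w \<sigma>1"
    and attr: "attractor_strategy VMin T E \<sigma>2"
    and p: "0 < p" "p < 1"
    and tau: "memoryless_strategy E VMax \<tau>"
  shows "measure (mc_paths (mc_kernel VMax VMin (rho_p E w \<sigma>1 \<sigma>2 p) \<tau>) v0)
           {\<omega>. \<exists>n. \<omega> n \<in> T} = 1"
proof -
  let ?K = "mc_kernel VMax VMin (rho_p E w \<sigma>1 \<sigma>2 p) \<tau>"
  let ?s = "support_successor VMin E w \<sigma>1 \<sigma>2 \<tau>"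
  have md: "md_strategy E VMin \<sigma>1" "md_strategy E VMin \<sigma>2"
    using NC attr by (simp_all add: NC_strategy_def attractor_strategy_def)
  have s_K: "?s u \<in> set_pmf (?K u)" if "u \<notin> T" for u
    using game p that by (rule support_successor_in_set_pmf)
  have "\<exists>n. (?s ^^ n) x \<in> T" for x
  proof (rule orbit_reaches_target[OF NC attr])
    show "(u, ?s u) \<in> E" if "u \<notin> T" for u
      using game md p tau that s_K[OF that] by (rule set_pmf_mc_kernel_rho_p_edge)
  qed (simp add: support_successor_def)
  then have "\<exists>y\<in>T. (x, y) \<in> {(a, b). b \<in> set_pmf (?K a)}\<^sup>*" for x
    using s_K by (intro rtrancl_reaches_along_orbit) simp_all
  then show ?thesis
    by (rule measure_mc_paths_reach)
qed

end
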